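(* Let $G$ be an oriented graph on $[n]$ with $|\mathcal{P}(G)|\ge 1$, and suppose the poset $P=([n],\le_G)$ has dimension $2$. Then \[\max_{\sigma,\rho\in\mathcal{P}(G)} d_K(\sigma,\rho)=|I(P)|.\]
   Context: Write a permutation $\sigma\in S_n$ as $\sigma=\sigma_1\cdots\sigma_n$. A permutation $\sigma$ satisfies an oriented graph $G=([n],E)$ if $\sigma_u>\sigma_v$ for every oriented edge $u\to v\in E$; $\mathcal{P}(G)$ is the set of permutations satisfying $G$. Write $u\rightsquigarrow v$ if there is an oriented path from $u$ to $v$ in $G$. The poset $P=([n],\le_G)$ is defined by $a\le_G b$ iff $a\rightsquigarrow b$ or $a=b$. The dimension of a poset is the smallest number of total orders on its ground set whose intersection is the poset's order. $I(P)=\{(i,j): i<j,\ i\not\rightsquigarrow j,\ j\not\rightsquigarrow i\}$ is the set of incomparable pairs. For $\sigma,\rho\in S_n$, a pair $i<j$ is discordant if $(\sigma_i-\sigma_j)(\rho_i-\rho_j)<0$; $d_K(\sigma,\rho)$ (Kendall-Tau metric) is the number of discordant pairs. *)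

theory Defs
  imports "HOL-Combinatorics.Permutations"
begin

definition oriented_graph :: "nat \<Rightarrow> (nat \<times> nat) set \<Rightarrow> bool" where
  "oriented_graph n E \<longleftrightarrow> E \<subseteq> {1..n} \<times> {1..n} \<and> (\<forall>u. (u,u) \<notin> E)
     \<and> (\<forall>u v. (u,v) \<in> E \<longrightarrow> (v,u) \<notin> E)"

definition satisfies :: "(nat \<times> nat) set \<Rightarrow> (nat \<Rightarrow> nat) \<Rightarrow> bool" where
  "satisfies E \<sigma> \<longleftrightarrow> (\<forall>u v. (u,v) \<in> E \<longrightarrow> \<sigma> u > \<sigma> v)"

definition sat_perms :: "nat \<Rightarrow> (nat \<times> nat) set \<Rightarrow> (nat \<Rightarrow> nat) set" where
  "sat_perms n E = {\<sigma>. \<sigma> permutes {1..n} \<and> satisfies E \<sigma>}"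

abbreviation reaches :: "(nat \<times> nat) set \<Rightarrow> nat \<Rightarrow> nat \<Rightarrow> bool" where
  "reaches E u v \<equiv> (u, v) \<in> E\<^sup>+"

definition leG :: "nat \<Rightarrow> (nat \<times> nat) set \<Rightarrow> (nat \<times> nat) set" where
  "leG n E = {(a,b). a \<in> {1..n} \<and> b \<in> {1..n} \<and> (reaches E a b \<or> a = b)}"

definition order_dim :: "nat set \<Rightarrow> (nat \<times> nat) set \<Rightarrow> nat" where
  "order_dim A R = (LEAST k. \<exists>F. finite F \<and> card F = k \<and>
       (\<forall>L\<in>F. linear_order_on A L) \<and> \<Inter>F = R)"

definition incomparable_pairs :: "nat \<Rightarrow> (nat \<times> nat) set \<Rightarrow> (nat \<times> nat) set" where
  "incomparable_pairs n E = {(i,j). i \<in> {1..n} \<and> j \<in> {1..n} \<and> i < j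
       \<and> \<not> reaches E i j \<and> \<not> reaches E j i}"

definition kendall_tau :: "nat \<Rightarrow> (nat \<Rightarrow> nat) \<Rightarrow> (nat \<Rightarrow> nat) \<Rightarrow> nat" where
  "kendall_tau n \<sigma> \<rho> = card {(i,j). i \<in> {1..n} \<and> j \<in> {1..n} \<and> i < j \<and>
       (int (\<sigma> i) - int (\<sigma> j)) * (int (\<rho> i) - int (\<rho> j)) < 0}"

end

theory Submission
  imports Defs
begin

(* Satisfying permutations reverse \<le>\<^sub>G, so two of them can only be discordant on
   incomparable pairs. Conversely, a realizer {L1, L2} of the dimension-2 poset orders every
   incomparable pair oppositely in L1 and L2, and the rank permutations of L1 and L2 are
   satisfying permutations discordant on all of them. A realizer of size order_dim exists
   because a finite partial order is the intersection of its linear extensions: an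
   incomparable pair can be put in either order. *)

lemma card_lower_set_less:
  assumes "finite A" "partial_order_on A P" "(x, y) \<in> P" "x \<noteq> y"
  shows "card {z\<in>A. (z, x) \<in> P} < card {z\<in>A. (z, y) \<in> P}"
proof (rule psubset_card_mono)
  note P = partial_order_onD[OF assms(2)]
  show "finite {z\<in>A. (z, y) \<in> P}" using assms(1) by simp
  have "{z\<in>A. (z, x) \<in> P} \<subseteq> {z\<in>A. (z, y) \<in> P}"
    using P(2) assms(3) by (auto dest: transD)
  moreover have "y \<in> {z\<in>A. (z, y) \<in> P}"
    using P(1,4) assms(3) by (auto simp: refl_on_def)
  moreover have "y \<notin> {z\<in>A. (z, x) \<in> P}"
    using P(3) assms(3,4) by (auto dest: antisymD)
  ultimately show "{z\<in>A. (z, x) \<in> P} \<subset> {z\<in>A. (z, y) \<in> P}" by blast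
qed

lemma card_upper_set_less:
  assumes "finite A" "partial_order_on A P" "(x, y) \<in> P" "x \<noteq> y"
  shows "card {z\<in>A. (y, z) \<in> P} < card {z\<in>A. (x, z) \<in> P}"
  using card_lower_set_less[of A "P\<inverse>" y x] assms by simp

lemma finite_partial_order_extends_to_linear:
  fixes A :: "'a::linorder set"
  assumes "finite A" "partial_order_on A P"
  shows "\<exists>L. linear_order_on A L \<and> P \<subseteq> L"
proof -
  define h where "h x = card {z\<in>A. (z, x) \<in> P}" for x
  define L where "L = {(x, y). x \<in> A \<and> y \<in> A \<and> (h x < h y \<or> h x = h y \<and> x \<le> y)}"
  have "linear_order_on A L"
    unfolding L_def order_on_defs refl_on_def trans_def antisym_def total_on_def by auto
  moreover have "P \<subseteq> L"
  proof
    fix p assume "p \<in> P"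
    then obtain x y where p: "p = (x, y)" "(x, y) \<in> P" by (cases p) auto
    then have "x \<in> A" "y \<in> A" using partial_order_onD(4)[OF assms(2)] by auto
    moreover have "x \<noteq> y \<Longrightarrow> h x < h y"
      unfolding h_def using card_lower_set_less[OF assms p(2)] by simp
    ultimately show "p \<in> L" unfolding L_def p by auto
  qed
  ultimately show ?thesis by blast
qed

(* Adds the pairs forced by y \<le> x; transitivity survives because two new pairs
   could only be chained through (x, y) \<in> P. *)
lemma partial_order_on_extend_incomparable:
  assumes "partial_order_on A P" "x \<in> A" "y \<in> A" "(x, y) \<notin> P"
  shows "partial_order_on A (P \<union> {(u, v). (u, y) \<in> P \<and> (x, v) \<in> P})"
proof -
  note P = partial_order_onD[OF assms(1)]
  have "trans (P \<union> {(u, v). (u, y) \<in> P \<and> (x, v) \<in> P})"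
    using P(2) assms(4) unfolding trans_def by blast
  moreover have "antisym (P \<union> {(u, v). (u, y) \<in> P \<and> (x, v) \<in> P})"
    using P(2,3) assms(4) unfolding trans_def antisym_def by blast
  ultimately show ?thesis
    using P(1,4) assms(2,3) unfolding order_on_defs refl_on_def by blast
qed

lemma Inter_linear_extensions:
  fixes A :: "'a::linorder set"
  assumes "finite A" "partial_order_on A P"
  shows "\<Inter>{L. linear_order_on A L \<and> P \<subseteq> L} = P"
proof
  show "P \<subseteq> \<Inter>{L. linear_order_on A L \<and> P \<subseteq> L}" by blast
  show "\<Inter>{L. linear_order_on A L \<and> P \<subseteq> L} \<subseteq> P"
  proof (rule subrelI, rule ccontr)
    fix x y assume xy: "(x, y) \<in> \<Inter>{L. linear_order_on A L \<and> P \<subseteq> L}" and "(x, y) \<notin> P"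
    obtain L0 where L0: "linear_order_on A L0" "P \<subseteq> L0"
      using finite_partial_order_extends_to_linear[OF assms] by blast
    then have "(x, y) \<in> L0" using xy by blast
    then have A: "x \<in> A" "y \<in> A" using L0(1) unfolding order_on_defs by auto
    have "x \<noteq> y"
      using \<open>(x, y) \<notin> P\<close> A partial_order_onD(1)[OF assms(2)] by (auto simp: refl_on_def)
    let ?Q = "P \<union> {(u, v). (u, y) \<in> P \<and> (x, v) \<in> P}"
    obtain L where L: "linear_order_on A L" "?Q \<subseteq> L"
      using finite_partial_order_extends_to_linear[OF assms(1)
          partial_order_on_extend_incomparable[OF assms(2) A \<open>(x, y) \<notin> P\<close>]] by blast
    have "(y, x) \<in> L"
      using L(2) A partial_order_onD(1)[OF assms(2)] by (auto simp: refl_on_def)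
    moreover have "(x, y) \<in> L" using xy L by blast
    ultimately show False
      using \<open>x \<noteq> y\<close> L(1) unfolding order_on_defs by (auto dest: antisymD)
  qed
qed

lemma order_dim_realizer:
  assumes "finite A" "partial_order_on A P"
  shows "\<exists>F. card F = order_dim A P \<and> (\<forall>L\<in>F. linear_order_on A L) \<and> \<Inter>F = P"
proof -
  let ?realizer = "\<lambda>k. \<exists>F. finite F \<and> card F = k \<and> (\<forall>L\<in>F. linear_order_on A L) \<and> \<Inter>F = P"
  let ?F = "{L. linear_order_on A L \<and> P \<subseteq> L}"
  have "finite ?F"
    by (rule finite_subset[of _ "Pow (A \<times> A)"]) (auto simp: order_on_defs assms(1))
  then have "?realizer (card ?F)" using Inter_linear_extensions[OF assms] by blast
  then have "?realizer (order_dim A P)" unfolding order_dim_def by (rule LeastI)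
  then show ?thesis by blast
qed

lemma satisfies_reaches_less:
  assumes "satisfies E \<sigma>" "reaches E u v"
  shows "\<sigma> v < \<sigma> u"
  using assms(2)
proof (induction rule: trancl_induct)
  case (base v)
  then show ?case using assms(1) unfolding satisfies_def by auto
next
  case (step v w)
  then show ?case using assms(1) unfolding satisfies_def by fastforce
qed

lemma partial_order_on_leG:
  assumes "satisfies E \<sigma>"
  shows "partial_order_on {1..n} (leG n E)"
proof -
  have "trans (leG n E)"
    unfolding leG_def trans_def by (auto intro: trancl_trans)
  moreover have "antisym (leG n E)"
  proof (rule antisymI)
    fix u v assume "(u, v) \<in> leG n E" "(v, u) \<in> leG n E"
    then show "u = v"
      unfolding leG_def
      using satisfies_reaches_less[OF assms, of u v] satisfies_reaches_less[OF assms, of v u] by auto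
  qed
  ultimately show ?thesis unfolding order_on_defs refl_on_def leG_def by auto
qed

(* L-smaller elements get larger values, as satisfies demands for the edges of G;
   the identity outside [n] is what permutes requires. *)
definition rank_perm :: "nat \<Rightarrow> (nat \<times> nat) set \<Rightarrow> nat \<Rightarrow> nat" where
  "rank_perm n L x = (if x \<in> {1..n} then card {z\<in>{1..n}. (x, z) \<in> L} else x)"

lemma rank_perm_less:
  assumes "linear_order_on {1..n} L" "(x, y) \<in> L" "x \<noteq> y"
  shows "rank_perm n L y < rank_perm n L x"
proof -
  have "x \<in> {1..n}" "y \<in> {1..n}" using assms(1,2) unfolding order_on_defs by auto
  moreover have "partial_order_on {1..n} L" using assms(1) by (simp add: linear_order_on_def)
  ultimately show ?thesis
    unfolding rank_perm_def using card_upper_set_less[of "{1..n}" L x y] assms(2,3) by simp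
qed

lemma rank_perm_permutes:
  assumes "linear_order_on {1..n} L"
  shows "rank_perm n L permutes {1..n}"
proof (rule bij_imp_permutes)
  have inj: "inj_on (rank_perm n L) {1..n}"
  proof (rule inj_onI, rule ccontr)
    fix x y assume "x \<in> {1..n}" "y \<in> {1..n}" "rank_perm n L x = rank_perm n L y" "x \<noteq> y"
    then have "(x, y) \<in> L \<or> (y, x) \<in> L"
      using assms unfolding linear_order_on_def total_on_def by blast
    then show False
      using rank_perm_less[OF assms, of x y] rank_perm_less[OF assms, of y x] \<open>x \<noteq> y\<close>
        \<open>rank_perm n L x = rank_perm n L y\<close> by auto
  qed
  have "rank_perm n L x \<in> {1..n}" if x: "x \<in> {1..n}" for x
  proof -
    have "x \<in> {z\<in>{1..n}. (x, z) \<in> L}"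
      using x assms unfolding order_on_defs refl_on_def by auto
    then have "card {x} \<le> card {z\<in>{1..n}. (x, z) \<in> L}" by (intro card_mono) auto
    moreover have "card {z\<in>{1..n}. (x, z) \<in> L} \<le> card {1..n}" by (rule card_mono) auto
    ultimately show ?thesis using x unfolding rank_perm_def by simp
  qed
  then have "rank_perm n L ` {1..n} = {1..n}"
    using endo_inj_surj[OF _ _ inj] by blast
  then show "bij_betw (rank_perm n L) {1..n} {1..n}" using inj by (simp add: bij_betw_def)
  show "x \<notin> {1..n} \<Longrightarrow> rank_perm n L x = x" for x unfolding rank_perm_def by (rule if_not_P)
qed

lemma finite_sat_perms: "finite (sat_perms n E)"
  by (rule finite_subset[of _ "{p. p permutes {1..n}}"])
    (auto simp: sat_perms_def finite_permutations)

lemma rank_perm_in_sat_perms: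
  assumes "oriented_graph n E" "linear_order_on {1..n} L" "leG n E \<subseteq> L"
  shows "rank_perm n L \<in> sat_perms n E"
proof -
  have "rank_perm n L v < rank_perm n L u" if "(u, v) \<in> E" for u v
  proof (rule rank_perm_less[OF assms(2)])
    show "u \<noteq> v" using assms(1) that unfolding oriented_graph_def by auto
    have "(u, v) \<in> leG n E"
      using assms(1) that unfolding oriented_graph_def leG_def by auto
    then show "(u, v) \<in> L" using assms(3) by blast
  qed
  then show ?thesis
    unfolding sat_perms_def satisfies_def using rank_perm_permutes[OF assms(2)] by auto
qed

lemma int_diff_mult_neg_iff:
  "(int a - int b) * (int c - int d) < 0 \<longleftrightarrow> a < b \<and> d < c \<or> b < a \<and> c < d"
  by (auto simp: mult_less_0_iff)

lemma kendall_tau_le_card_incomparable_pairs: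
  assumes "satisfies E \<sigma>" "satisfies E \<rho>"
  shows "kendall_tau n \<sigma> \<rho> \<le> card (incomparable_pairs n E)"
  unfolding kendall_tau_def int_diff_mult_neg_iff
proof (rule card_mono)
  show "finite (incomparable_pairs n E)"
    by (rule finite_subset[of _ "{1..n} \<times> {1..n}"]) (auto simp: incomparable_pairs_def)
  have "\<not> reaches E i j \<and> \<not> reaches E j i"
    if "\<sigma> i < \<sigma> j \<and> \<rho> j < \<rho> i \<or> \<sigma> j < \<sigma> i \<and> \<rho> i < \<rho> j" for i j
    using that satisfies_reaches_less[OF assms(1), of i j] satisfies_reaches_less[OF assms(1), of j i]
      satisfies_reaches_less[OF assms(2), of i j] satisfies_reaches_less[OF assms(2), of j i]
    by auto
  then show "{(i, j). i \<in> {1..n} \<and> j \<in> {1..n} \<and> i < j \<and>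
      (\<sigma> i < \<sigma> j \<and> \<rho> j < \<rho> i \<or> \<sigma> j < \<sigma> i \<and> \<rho> i < \<rho> j)} \<subseteq> incomparable_pairs n E"
    unfolding incomparable_pairs_def by blast
qed

lemma card_incomparable_pairs_le_kendall_tau_rank_perm:
  assumes "linear_order_on {1..n} L1" "linear_order_on {1..n} L2" "L1 \<inter> L2 = leG n E"
  shows "card (incomparable_pairs n E) \<le> kendall_tau n (rank_perm n L1) (rank_perm n L2)"
  unfolding kendall_tau_def int_diff_mult_neg_iff
proof (rule card_mono)
  show "finite {(i, j). i \<in> {1..n} \<and> j \<in> {1..n} \<and> i < j \<and>
      (rank_perm n L1 i < rank_perm n L1 j \<and> rank_perm n L2 j < rank_perm n L2 i \<or>
       rank_perm n L1 j < rank_perm n L1 i \<and> rank_perm n L2 i < rank_perm n L2 j)}"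
    by (rule finite_subset[of _ "{1..n} \<times> {1..n}"]) auto
  have "rank_perm n L1 i < rank_perm n L1 j \<and> rank_perm n L2 j < rank_perm n L2 i \<or>
      rank_perm n L1 j < rank_perm n L1 i \<and> rank_perm n L2 i < rank_perm n L2 j"
    if "(i, j) \<in> incomparable_pairs n E" for i j
  proof -
    have ij: "i \<in> {1..n}" "j \<in> {1..n}" "i \<noteq> j" "(i, j) \<notin> L1 \<inter> L2" "(j, i) \<notin> L1 \<inter> L2"
      using that assms(3) unfolding incomparable_pairs_def leG_def by auto
    then have "(i, j) \<in> L1 \<and> (j, i) \<in> L2 \<or> (j, i) \<in> L1 \<and> (i, j) \<in> L2"
      using assms(1,2) unfolding linear_order_on_def total_on_def by blast
    then show ?thesis
      using rank_perm_less[OF assms(1)] rank_perm_less[OF assms(2)] ij(3) by blast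
  qed
  then show "incomparable_pairs n E \<subseteq> {(i, j). i \<in> {1..n} \<and> j \<in> {1..n} \<and> i < j \<and>
      (rank_perm n L1 i < rank_perm n L1 j \<and> rank_perm n L2 j < rank_perm n L2 i \<or>
       rank_perm n L1 j < rank_perm n L1 i \<and> rank_perm n L2 i < rank_perm n L2 j)}"
    by (auto simp: incomparable_pairs_def)
qed

lemma leG_realizer_of_order_dim_2:
  assumes "sat_perms n E \<noteq> {}" "order_dim {1..n} (leG n E) = 2"
  obtains L1 L2 where "linear_order_on {1..n} L1" "linear_order_on {1..n} L2"
    "L1 \<inter> L2 = leG n E"
proof -
  obtain \<sigma> where "\<sigma> \<in> sat_perms n E" using assms(1) by blast
  then have "partial_order_on {1..n} (leG n E)"
    using partial_order_on_leG unfolding sat_perms_def by blast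
  then have "\<exists>F. card F = order_dim {1..n} (leG n E) \<and> (\<forall>L\<in>F. linear_order_on {1..n} L)
      \<and> \<Inter>F = leG n E"
    by (rule order_dim_realizer[OF finite_atLeastAtMost])
  then obtain F where F: "card F = 2" "\<forall>L\<in>F. linear_order_on {1..n} L" "\<Inter>F = leG n E"
    using assms(2) by auto
  then obtain L1 L2 where "F = {L1, L2}" by (meson card_2_iff)
  then show ?thesis using F that by auto
qed

lemma Max_kendall_tau_eqI:
  assumes "\<sigma> \<in> sat_perms n E" "\<rho> \<in> sat_perms n E"
    and "card (incomparable_pairs n E) \<le> kendall_tau n \<sigma> \<rho>"
  shows "Max ((\<lambda>(\<sigma>, \<rho>). kendall_tau n \<sigma> \<rho>) ` (sat_perms n E \<times> sat_perms n E))
           = card (incomparable_pairs n E)"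
proof (rule Max_eqI)
  have upper: "kendall_tau n \<sigma>' \<rho>' \<le> card (incomparable_pairs n E)"
    if "\<sigma>' \<in> sat_perms n E" "\<rho>' \<in> sat_perms n E" for \<sigma>' \<rho>'
    using that kendall_tau_le_card_incomparable_pairs unfolding sat_perms_def by blast
  show "finite ((\<lambda>(\<sigma>, \<rho>). kendall_tau n \<sigma> \<rho>) ` (sat_perms n E \<times> sat_perms n E))"
    using finite_sat_perms by simp
  show "k \<le> card (incomparable_pairs n E)"
    if "k \<in> (\<lambda>(\<sigma>, \<rho>). kendall_tau n \<sigma> \<rho>) ` (sat_perms n E \<times> sat_perms n E)" for k
    using that upper by auto
  have "kendall_tau n \<sigma> \<rho> = card (incomparable_pairs n E)"
    using assms upper[OF assms(1,2)] by simp
  then show "card (incomparable_pairs n E)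
      \<in> (\<lambda>(\<sigma>, \<rho>). kendall_tau n \<sigma> \<rho>) ` (sat_perms n E \<times> sat_perms n E)"
    using assms(1,2) by force
qed

theorem mainTheorem8:
  fixes n :: nat and E :: "(nat \<times> nat) set"
  assumes "oriented_graph n E"
    and "card (sat_perms n E) \<ge> 1"
    and "order_dim {1..n} (leG n E) = 2"
  shows "Max ((\<lambda>(\<sigma>, \<rho>). kendall_tau n \<sigma> \<rho>) ` (sat_perms n E \<times> sat_perms n E))
           = card (incomparable_pairs n E)"
proof -
  have "sat_perms n E \<noteq> {}" using assms(2) by auto
  then obtain L1 L2 where L: "linear_order_on {1..n} L1" "linear_order_on {1..n} L2"
    "L1 \<inter> L2 = leG n E"
    using leG_realizer_of_order_dim_2 assms(3) by blast
  show ?thesis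
  proof (rule Max_kendall_tau_eqI)
    show "rank_perm n L1 \<in> sat_perms n E" "rank_perm n L2 \<in> sat_perms n E"
      using rank_perm_in_sat_perms[OF assms(1)] L by auto
    show "card (incomparable_pairs n E) \<le> kendall_tau n (rank_perm n L1) (rank_perm n L2)"
      using card_incomparable_pairs_le_kendall_tau_rank_perm[OF L] .
  qed
qed

end
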